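(* Let $h=u+v+u^{-1}+v^{-1}+u^{-1}v^{-1}\in A=\mathbb C\langle u^{\pm1},v^{\pm1}\rangle$ and consider the derivation $\frac{d}{dt}x=\{h,x\}_K$ of $A$ (the Kontsevich flow). For every integer $k>0$, $\pi(h^k)$ is an integral of this flow: $\frac{d}{dt}h^k=\{h,h^k\}_K\in[A,A]$, i.e. $\pi\big(\tfrac{d}{dt}h^k\big)=0$.
   Context: $A$ is the group algebra over $\mathbb C$ of the free group on $u,v$; $[A,A]$ is the linear span of all $ab-ba$; $\pi:A\to A/[A,A]$ is the projection. $\mu(a\otimes b)=ab$; $A\otimes A$ has componentwise multiplication. The double bracket $\llbracket\cdot\rrbracket_K:A\otimes A\to A\otimes A$ is the linear map with $\llbracket u\otimes v\rrbracket_K=-vu\otimes1$, $\llbracket v\otimes u\rrbracket_K=uv\otimes1$, $\llbracket u\otimes u\rrbracket_K=\llbracket v\otimes v\rrbracket_K=0$, extended (also to inverse letters) by the Leibniz rules $\llbracket a\otimes bc\rrbracket_K=\llbracket a\otimes b\rrbracket_K(1\otimes c)+(b\otimes1)\llbracket a\otimes c\rrbracket_K$ and $\llbracket ab\otimes c\rrbracket_K=\llbracket a\otimes c\rrbracket_K(b\otimes1)+(1\otimes a)\llbracket b\otimes c\rrbracket_K$. The bracket is $\{a,b\}_K=\mu(\llbracket a\otimes b\rrbracket_K)$; it satisfies the Leibniz rule in the second argument, so $\{h,\cdot\}_K$ is a derivation of $A$. *)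

theory Defs
  imports Complex_Main
begin

text \<open>Free group F on two generators u, v, realised by freely reduced words.
  A letter is a pair (g, e): g = False means u, g = True means v;
  e = True means exponent +1, e = False means exponent -1.\<close>

type_synonym letter = "bool \<times> bool"
type_synonym word = "letter list"

definition inv_letter :: "letter \<Rightarrow> letter" where
  "inv_letter l = (fst l, \<not> snd l)"

fun red :: "word \<Rightarrow> word" where
  "red [] = []"
| "red (x # xs) = (case red xs of [] \<Rightarrow> [x]
                    | y # ys \<Rightarrow> (if y = inv_letter x then ys else x # y # ys))"

text \<open>The group algebra A = C[F]: finitely supported complex functions on reduced words.\<close>
definition algA :: "(word \<Rightarrow> complex) set" where
  "algA = {f. finite {w. f w \<noteq> 0} \<and> (\<forall>w. f w \<noteq> 0 \<longrightarrow> red w = w)}"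

definition addA :: "(word \<Rightarrow> complex) \<Rightarrow> (word \<Rightarrow> complex) \<Rightarrow> (word \<Rightarrow> complex)" where
  "addA f g = (\<lambda>w. f w + g w)"

definition smulA :: "complex \<Rightarrow> (word \<Rightarrow> complex) \<Rightarrow> (word \<Rightarrow> complex)" where
  "smulA c f = (\<lambda>w. c * f w)"

definition zeroA :: "word \<Rightarrow> complex" where
  "zeroA = (\<lambda>w. 0)"

definition gen :: "word \<Rightarrow> (word \<Rightarrow> complex)" where
  "gen w = (\<lambda>x. if x = red w then 1 else 0)"

definition oneA :: "word \<Rightarrow> complex" where
  "oneA = gen []"

definition mulA :: "(word \<Rightarrow> complex) \<Rightarrow> (word \<Rightarrow> complex) \<Rightarrow> (word \<Rightarrow> complex)" where
  "mulA f g = (\<lambda>w. \<Sum>p\<in>{(x, y). f x \<noteq> 0 \<and> g y \<noteq> 0 \<and> red (x @ y) = w}. f (fst p) * g (snd p))"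

fun powA :: "(word \<Rightarrow> complex) \<Rightarrow> nat \<Rightarrow> (word \<Rightarrow> complex)" where
  "powA f 0 = oneA"
| "powA f (Suc n) = mulA f (powA f n)"

text \<open>A \<otimes> A = C[F \<times> F] with componentwise multiplication.\<close>
definition algT :: "(word \<times> word \<Rightarrow> complex) set" where
  "algT = {X. finite {p. X p \<noteq> 0} \<and> (\<forall>x y. X (x, y) \<noteq> 0 \<longrightarrow> red x = x \<and> red y = y)}"

definition addT :: "(word \<times> word \<Rightarrow> complex) \<Rightarrow> (word \<times> word \<Rightarrow> complex) \<Rightarrow> (word \<times> word \<Rightarrow> complex)" where
  "addT X Y = (\<lambda>p. X p + Y p)"

definition smulT :: "complex \<Rightarrow> (word \<times> word \<Rightarrow> complex) \<Rightarrow> (word \<times> word \<Rightarrow> complex)" where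
  "smulT c X = (\<lambda>p. c * X p)"

definition tens :: "(word \<Rightarrow> complex) \<Rightarrow> (word \<Rightarrow> complex) \<Rightarrow> (word \<times> word \<Rightarrow> complex)" where
  "tens a b = (\<lambda>(x, y). a x * b y)"

definition mulT :: "(word \<times> word \<Rightarrow> complex) \<Rightarrow> (word \<times> word \<Rightarrow> complex) \<Rightarrow> (word \<times> word \<Rightarrow> complex)" where
  "mulT X Y = (\<lambda>(w1, w2). \<Sum>q\<in>{(p, r). X p \<noteq> 0 \<and> Y r \<noteq> 0 \<and>
        red (fst p @ fst r) = w1 \<and> red (snd p @ snd r) = w2}. X (fst q) * Y (snd q))"

definition muT :: "(word \<times> word \<Rightarrow> complex) \<Rightarrow> (word \<Rightarrow> complex)" where
  "muT X = (\<lambda>w. \<Sum>p\<in>{p. X p \<noteq> 0 \<and> red (fst p @ snd p) = w}. X p)"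

inductive_set commA :: "(word \<Rightarrow> complex) set" where
  zero: "zeroA \<in> commA"
| comm: "a \<in> algA \<Longrightarrow> b \<in> algA \<Longrightarrow> addA (mulA a b) (smulA (-1) (mulA b a)) \<in> commA"
| add: "x \<in> commA \<Longrightarrow> y \<in> commA \<Longrightarrow> addA x y \<in> commA"
| smul: "x \<in> commA \<Longrightarrow> smulA c x \<in> commA"

definition gu :: "word \<Rightarrow> complex" where "gu = gen [(False, True)]"
definition gv :: "word \<Rightarrow> complex" where "gv = gen [(True, True)]"

definition hK :: "word \<Rightarrow> complex" where
  "hK = addA (addA (addA (addA gu gv) (gen [(False, False)])) (gen [(True, False)]))
            (gen [(False, False), (True, False)])"

text \<open>K is the Kontsevich double bracket: the linear map on A \<otimes> A with the given
  values on generators and satisfying both Leibniz rules (this determines it uniquely).\<close>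
definition kontsevich_dbr :: "((word \<times> word \<Rightarrow> complex) \<Rightarrow> (word \<times> word \<Rightarrow> complex)) \<Rightarrow> bool" where
  "kontsevich_dbr K \<longleftrightarrow>
     (\<forall>X\<in>algT. K X \<in> algT) \<and>
     (\<forall>X\<in>algT. \<forall>Y\<in>algT. K (addT X Y) = addT (K X) (K Y)) \<and>
     (\<forall>c. \<forall>X\<in>algT. K (smulT c X) = smulT c (K X)) \<and>
     K (tens gu gv) = smulT (-1) (tens (mulA gv gu) oneA) \<and>
     K (tens gv gu) = tens (mulA gu gv) oneA \<and>
     K (tens gu gu) = tens zeroA zeroA \<and>
     K (tens gv gv) = tens zeroA zeroA \<and>
     (\<forall>a\<in>algA. \<forall>b\<in>algA. \<forall>c\<in>algA.
        K (tens a (mulA b c)) = addT (mulT (K (tens a b)) (tens oneA c)) (mulT (tens b oneA) (K (tens a c)))) \<and>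
     (\<forall>a\<in>algA. \<forall>b\<in>algA. \<forall>c\<in>algA.
        K (tens (mulA a b) c) = addT (mulT (K (tens a c)) (tens b oneA)) (mulT (tens oneA a) (K (tens b c))))"

definition brK :: "((word \<times> word \<Rightarrow> complex) \<Rightarrow> (word \<times> word \<Rightarrow> complex)) \<Rightarrow>
    (word \<Rightarrow> complex) \<Rightarrow> (word \<Rightarrow> complex) \<Rightarrow> (word \<Rightarrow> complex)" where
  "brK K a b = muT (K (tens a b))"

end

theory Submission
  imports Defs "HOL-Library.Poly_Mapping" "HOL-Library.Product_Plus"
begin

text \<open>
  The left rule makes a |-> K(a \<otimes> c) a derivation twisted by
  the embeddings a |-> a \<otimes> 1 and a |-> 1 \<otimes> a, so its values at u^-1 and v^-1 are forced by
  the prescribed values at u and v. A direct computation then gives {h, h}_K = h c - c h with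
  c = v + u^-1. Since {h, _}_K is a derivation, {h, h^k}_K = h^k c - c h^k is a commutator,
  for every k.
\<close>

lemma twisted_derivation_inverse:
  fixes \<delta> L R :: "'a::monoid_mult \<Rightarrow> 'b::ring_1"
  assumes leibniz: "\<And>x y. \<delta> (x * y) = \<delta> x * R y + L x * \<delta> y"
    and L_mult: "\<And>x y. L (x * y) = L x * L y"
    and "L 1 = 1" "R 1 = 1" "p * q = 1" "q * p = 1"
  shows "\<delta> q = - (L q * \<delta> p * R q)"
proof -
  have "\<delta> 1 = 0"
    using leibniz[of 1 1] \<open>L 1 = 1\<close> \<open>R 1 = 1\<close> by simp
  then have "\<delta> p * R q + L p * \<delta> q = 0"
    using leibniz[of p q] \<open>p * q = 1\<close> by simp
  then have "L q * \<delta> p * R q + L (q * p) * \<delta> q = 0"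
    by (metis L_mult distrib_left mult.assoc mult_zero_right)
  then show ?thesis
    using \<open>q * p = 1\<close> \<open>L 1 = 1\<close> by (simp add: eq_neg_iff_add_eq_0 add.commute)
qed

lemma derivation_power_commutator:
  fixes D :: "'a::ring_1 \<Rightarrow> 'a"
  assumes leibniz: "\<And>x y. D (x * y) = D x * y + x * D y" and "D h = h * c - c * h"
  shows "D (h ^ n) = h ^ n * c - c * h ^ n"
proof (induction n)
  case 0
  show ?case using leibniz[of 1 1] by simp
next
  case (Suc n)
  have "D (h ^ Suc n) = D h * h ^ n + h * D (h ^ n)"
    using leibniz by simp
  also have "\<dots> = h ^ Suc n * c - c * h ^ Suc n"
    unfolding Suc \<open>D h = h * c - c * h\<close> by (simp add: algebra_simps)
  finally show ?case .
qed

section \<open>Tensor products and multiplication of finitely supported functions\<close>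

abbreviation lookup where "lookup \<equiv> Poly_Mapping.lookup"
abbreviation keys where "keys \<equiv> Poly_Mapping.keys"
abbreviation single where "single \<equiv> Poly_Mapping.single"

lemma lookup_times_eq_sum:
  fixes p q :: "'a::monoid_add \<Rightarrow>\<^sub>0 'b::semiring_no_zero_divisors"
  shows "lookup (p * q) g = (\<Sum>x\<in>{(a, b). lookup p a \<noteq> 0 \<and> lookup q b \<noteq> 0 \<and> a + b = g}.
      lookup p (fst x) * lookup q (snd x))"
proof -
  have fin: "finite {a. lookup p a \<noteq> 0}" "finite {a. lookup q a \<noteq> 0}" by auto
  have "lookup (p * q) g = (\<Sum>(a, b). lookup p a * lookup q b when g = a + b)"
    by (simp add: times_poly_mapping.rep_eq prod_fun_unfold_prod[OF fin])
  also have "\<dots> = (\<Sum>x\<in>{x. (case x of (a, b) \<Rightarrow> lookup p a * lookup q b when g = a + b) \<noteq> 0}.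
        case x of (a, b) \<Rightarrow> lookup p a * lookup q b when g = a + b)"
    by (rule Sum_any.expand_set)
  also have "\<dots> = (\<Sum>x\<in>{(a, b). lookup p a \<noteq> 0 \<and> lookup q b \<noteq> 0 \<and> a + b = g}.
      lookup p (fst x) * lookup q (snd x))"
    by (rule sum.cong) (auto simp: when_def split: if_splits)
  finally show ?thesis .
qed

lemma poly_mapping_single_induct [case_names zero single_add]:
  assumes "P 0" and "\<And>k c p. P p \<Longrightarrow> P (single k c + p)"
  shows "P p"
proof (induction p rule: update_induct)
  case (update f a b)
  have "Poly_Mapping.update a b f = single a b + f"
    by (rule poly_mapping_eqI)
      (use update.hyps(1) in
        \<open>auto simp: lookup_update lookup_add lookup_single when_def in_keys_iff\<close>)
  then show ?case using assms(2) update.IH by simp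
qed (rule assms(1))

lemma one_poly_mapping_single: "1 = single 0 1"
  by (simp add: one_poly_mapping_def)

definition tensor_pm :: "('a \<Rightarrow>\<^sub>0 'c) \<Rightarrow> ('b \<Rightarrow>\<^sub>0 'c) \<Rightarrow> ('a \<times> 'b \<Rightarrow>\<^sub>0 'c::mult_zero)" where
  "tensor_pm p q = Abs_poly_mapping (\<lambda>(a, b). lookup p a * lookup q b)"

lemma lookup_tensor_pm: "lookup (tensor_pm p q) k = lookup p (fst k) * lookup q (snd k)"
proof -
  have "{k. (\<lambda>(a, b). lookup p a * lookup q b) k \<noteq> 0} \<subseteq> keys p \<times> keys q"
    by (auto simp: in_keys_iff)
  then have "finite {k. (\<lambda>(a, b). lookup p a * lookup q b) k \<noteq> 0}"
    by (rule finite_subset) simp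
  then show ?thesis by (simp add: tensor_pm_def split: prod.splits)
qed

lemma tensor_pm_zero [simp]: "tensor_pm 0 q = 0" "tensor_pm p 0 = 0"
  by (simp_all add: poly_mapping_eq_iff lookup_tensor_pm fun_eq_iff)

lemma tensor_pm_add:
  fixes p q r :: "_ \<Rightarrow>\<^sub>0 'c::semiring_0"
  shows "tensor_pm (p + q) r = tensor_pm p r + tensor_pm q r"
  "tensor_pm p (q + r) = tensor_pm p q + tensor_pm p r"
  by (simp_all add: poly_mapping_eq_iff lookup_tensor_pm lookup_add fun_eq_iff
      distrib_left distrib_right)

lemma tensor_pm_single: "tensor_pm (single a x) (single b y) = single (a, b) (x * y)"
  by (rule poly_mapping_eqI) (auto simp: lookup_tensor_pm lookup_single when_def)

lemma tensor_pm_one: "tensor_pm (1 :: 'a::zero \<Rightarrow>\<^sub>0 'c::semiring_1) (1 :: 'b::zero \<Rightarrow>\<^sub>0 'c) = 1"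
  unfolding one_poly_mapping_single tensor_pm_single by (simp add: zero_prod_def)

lemma tensor_pm_one_single: "tensor_pm 1 (single b y) = single (0, b) (y :: 'c::semiring_1)"
  by (simp only: one_poly_mapping_single tensor_pm_single mult_1)

lemma tensor_pm_single_one: "tensor_pm (single a x) 1 = single (a, 0) (x :: 'c::semiring_1)"
  by (simp only: one_poly_mapping_single tensor_pm_single mult_1_right)

lemma tensor_pm_single_mult:
  fixes c d :: "'k::monoid_add \<Rightarrow>\<^sub>0 'c::comm_semiring_0"
  shows "tensor_pm (single k x) (single l y) * tensor_pm c d =
    tensor_pm (single k x * c) (single l y * d)"
proof (induction c rule: poly_mapping_single_induct)
  case (single_add k' x' c)
  have "tensor_pm (single k x) (single l y) * tensor_pm (single k' x') d =
      tensor_pm (single k x * single k' x') (single l y * d)"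
    by (induction d rule: poly_mapping_single_induct)
      (simp_all add: tensor_pm_add distrib_left tensor_pm_single mult_single mult_ac)
  then show ?case using single_add by (simp add: tensor_pm_add distrib_left)
qed simp

lemma tensor_pm_mult:
  fixes a b c d :: "'k::monoid_add \<Rightarrow>\<^sub>0 'c::comm_semiring_0"
  shows "tensor_pm a b * tensor_pm c d = tensor_pm (a * c) (b * d)"
proof (induction a rule: poly_mapping_single_induct)
  case (single_add k x a)
  have "tensor_pm (single k x) b * tensor_pm c d = tensor_pm (single k x * c) (b * d)"
    by (induction b rule: poly_mapping_single_induct)
      (simp_all add: tensor_pm_add distrib_right tensor_pm_single_mult)
  then show ?case using single_add by (simp add: tensor_pm_add distrib_right)
qed simp

definition mult_map :: "('a \<times> 'a \<Rightarrow>\<^sub>0 'b) \<Rightarrow> ('a::plus \<Rightarrow>\<^sub>0 'b::comm_monoid_add)" where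
  "mult_map X = Abs_poly_mapping (\<lambda>g. \<Sum>k\<in>{k\<in>keys X. fst k + snd k = g}. lookup X k)"

lemma lookup_mult_map: "lookup (mult_map X) g = (\<Sum>k\<in>{k\<in>keys X. fst k + snd k = g}. lookup X k)"
proof -
  have "{g. (\<Sum>k\<in>{k\<in>keys X. fst k + snd k = g}. lookup X k) \<noteq> 0} \<subseteq> (\<lambda>k. fst k + snd k) ` keys X"
  proof
    fix g assume "g \<in> {g. (\<Sum>k\<in>{k\<in>keys X. fst k + snd k = g}. lookup X k) \<noteq> 0}"
    then obtain k where "k \<in> keys X" "fst k + snd k = g"
      by (metis (mono_tags, lifting) empty_Collect_eq mem_Collect_eq sum.empty)
    then show "g \<in> (\<lambda>k. fst k + snd k) ` keys X" by auto
  qed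
  then have "finite {g. (\<Sum>k\<in>{k\<in>keys X. fst k + snd k = g}. lookup X k) \<noteq> 0}"
    by (rule finite_subset) simp
  then show ?thesis by (simp add: mult_map_def)
qed

lemma lookup_mult_map_superset:
  assumes "finite S" "keys X \<subseteq> S"
  shows "lookup (mult_map X) g = (\<Sum>k\<in>{k\<in>S. fst k + snd k = g}. lookup X k)"
  unfolding lookup_mult_map
  by (rule sum.mono_neutral_left) (use assms in \<open>auto simp: in_keys_iff\<close>)

lemma mult_map_add: "mult_map (X + Y) = mult_map X + mult_map Y"
proof (rule poly_mapping_eqI)
  fix g
  let ?S = "keys X \<union> keys Y \<union> keys (X + Y)"
  let ?sum = "\<lambda>Z. \<Sum>k\<in>{k\<in>?S. fst k + snd k = g}. lookup Z k"
  have "lookup (mult_map X) g = ?sum X" "lookup (mult_map Y) g = ?sum Y"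
    "lookup (mult_map (X + Y)) g = ?sum (X + Y)"
    by (rule lookup_mult_map_superset; auto)+
  then show "lookup (mult_map (X + Y)) g = lookup (mult_map X + mult_map Y) g"
    by (simp only: lookup_add sum.distrib)
qed

lemma mult_map_zero [simp]: "mult_map 0 = 0"
  by (rule poly_mapping_eqI) (simp add: lookup_mult_map)

lemma mult_map_single: "mult_map (single k c) = single (fst k + snd k) c"
proof (rule poly_mapping_eqI)
  fix g
  have "{k' \<in> {k}. fst k' + snd k' = g} = (if g = fst k + snd k then {k} else {})" by auto
  then show "lookup (mult_map (single k c)) g = lookup (single (fst k + snd k) c) g"
    by (subst lookup_mult_map_superset[of "{k}"]) (auto simp: lookup_single when_def)
qed

lemma mult_map_uminus:
  fixes X :: "'a::plus \<times> 'a \<Rightarrow>\<^sub>0 'b::ab_group_add"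
  shows "mult_map (- X) = - mult_map X"
proof -
  have "mult_map X + mult_map (- X) = 0"
    by (simp flip: mult_map_add)
  then show ?thesis
    by (rule minus_unique[symmetric])
qed

lemma mult_map_diff:
  fixes X Y :: "'a::plus \<times> 'a \<Rightarrow>\<^sub>0 'b::ab_group_add"
  shows "mult_map (X - Y) = mult_map X - mult_map Y"
  unfolding diff_conv_add_uminus mult_map_add mult_map_uminus ..

context
  fixes a b :: "'k::monoid_add \<Rightarrow>\<^sub>0 'c::semiring_1"
    and X :: "'k \<times> 'k \<Rightarrow>\<^sub>0 'c"
begin

lemma mult_map_tensor_pm: "mult_map (tensor_pm a b) = a * b"
proof (induction a rule: poly_mapping_single_induct)
  case (single_add k x a)
  have "mult_map (tensor_pm (single k x) b) = single k x * b"
    by (induction b rule: poly_mapping_single_induct)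
      (simp_all add: tensor_pm_add mult_map_add distrib_left tensor_pm_single mult_map_single
        mult_single)
  then show ?case using single_add by (simp add: tensor_pm_add mult_map_add distrib_right)
qed simp

lemma mult_map_mult_tensor_one: "mult_map (X * tensor_pm 1 b) = mult_map X * b"
proof (induction X rule: poly_mapping_single_induct)
  case (single_add k x X)
  have "mult_map (single k x * tensor_pm 1 b) = single (fst k + snd k) x * b"
  proof (induction b rule: poly_mapping_single_induct)
    case (single_add d y b)
    show ?case
      using single_add by (cases k)
        (simp add: tensor_pm_one_single tensor_pm_add distrib_left mult_map_add mult_single
          mult_map_single add.assoc)
  qed simp
  then show ?case using single_add by (simp add: distrib_right mult_map_add mult_map_single)
qed simp

lemma mult_map_tensor_one_mult: "mult_map (tensor_pm a 1 * X) = a * mult_map X"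
proof (induction X rule: poly_mapping_single_induct)
  case (single_add k x X)
  have "mult_map (tensor_pm a 1 * single k x) = a * single (fst k + snd k) x"
  proof (induction a rule: poly_mapping_single_induct)
    case (single_add d y a)
    show ?case
      using single_add by (cases k)
        (simp add: tensor_pm_single_one tensor_pm_add distrib_right mult_map_add mult_single
          mult_map_single add.assoc)
  qed simp
  then show ?case using single_add by (simp add: distrib_left mult_map_add mult_map_single)
qed simp

end

section \<open>Free reduction and the free group\<close>

definition cancel_cons :: "letter \<Rightarrow> word \<Rightarrow> word" where
  "cancel_cons x w = (case w of [] \<Rightarrow> [x] | y # ys \<Rightarrow> (if y = inv_letter x then ys else x # y # ys))"

lemma red_Cons [simp]: "red (x # xs) = cancel_cons x (red xs)"
  by (simp add: cancel_cons_def)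

declare red.simps(2) [simp del]

lemma inv_letter_inv_letter [simp]: "inv_letter (inv_letter a) = a"
  by (cases a) (simp add: inv_letter_def)

fun reduced :: "word \<Rightarrow> bool" where
  "reduced [] = True"
| "reduced [x] = True"
| "reduced (x # y # ys) = (y \<noteq> inv_letter x \<and> reduced (y # ys))"

lemma reduced_tl: "reduced (x # xs) \<Longrightarrow> reduced xs"
  by (cases xs) auto

lemma reduced_cancel_cons: "reduced w \<Longrightarrow> reduced (cancel_cons x w)"
  by (cases w) (auto simp: cancel_cons_def dest: reduced_tl)

lemma reduced_red: "reduced (red w)"
  by (induction w) (auto intro: reduced_cancel_cons)

lemma red_reduced: "reduced w \<Longrightarrow> red w = w"
  by (induction w rule: reduced.induct) (auto simp: cancel_cons_def)

lemma red_red [simp]: "red (red w) = red w"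
  by (simp add: red_reduced reduced_red)

lemma cancel_cons_inv_letter: "reduced w \<Longrightarrow> cancel_cons a (cancel_cons (inv_letter a) w) = w"
  by (cases w rule: reduced.cases) (auto simp: cancel_cons_def inv_letter_def)

lemma red_append_right: "red (x @ y) = red (x @ red y)"
  by (induction x) auto

lemma red_cancel_cons_append: "red (cancel_cons a w @ y) = cancel_cons a (red (w @ y))"
proof (cases w)
  case (Cons b ws)
  show ?thesis
  proof (cases "b = inv_letter a")
    case True
    then have "cancel_cons a w = ws" "red (w @ y) = cancel_cons (inv_letter a) (red (ws @ y))"
      using Cons by (simp_all add: cancel_cons_def)
    then show ?thesis
      by (simp add: cancel_cons_inv_letter reduced_red)
  qed (use Cons in \<open>simp add: cancel_cons_def\<close>)
qed (simp add: cancel_cons_def)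

lemma red_append_left: "red (x @ y) = red (red x @ y)"
  by (induction x) (simp_all add: red_reduced reduced_red red_cancel_cons_append)

lemma red_assoc: "red (red (x @ y) @ z) = red (x @ red (y @ z))"
  by (metis append_assoc red_append_left red_append_right)

typedef fg = "{w. red w = w}"
  by (rule exI[of _ "[]"]) simp

lemma red_Rep_fg [simp]: "red (Rep_fg a) = Rep_fg a"
  using Rep_fg by simp

instantiation fg :: monoid_add
begin

definition zero_fg_def: "0 = Abs_fg []"
definition plus_fg_def: "a + b = Abs_fg (red (Rep_fg a @ Rep_fg b))"

instance
  by standard (simp_all add: plus_fg_def zero_fg_def Abs_fg_inverse Rep_fg_inverse red_assoc)

end

lemma Abs_fg_plus: "red x = x \<Longrightarrow> red y = y \<Longrightarrow> Abs_fg x + Abs_fg y = Abs_fg (red (x @ y))"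
  by (simp add: plus_fg_def Abs_fg_inverse)

lemma plus_fg_eq_Abs_fg_iff:
  "red w = w \<Longrightarrow> a + b = Abs_fg w \<longleftrightarrow> red (Rep_fg a @ Rep_fg b) = w"
  by (simp add: plus_fg_def Abs_fg_inject)

lemma sum_reindex_inj_range:
  assumes "inj g" "S \<subseteq> range g"
  shows "sum f S = sum (f \<circ> g) (g -` S)"
proof -
  have "S = g ` (g -` S)" using assms(2) by blast
  then show ?thesis
    by (metis assms(1) inj_on_subset subset_UNIV sum.reindex)
qed

definition alg_of :: "(fg \<Rightarrow>\<^sub>0 complex) \<Rightarrow> word \<Rightarrow> complex" where
  "alg_of p w = (if red w = w then lookup p (Abs_fg w) else 0)"

definition tensor_of :: "(fg \<times> fg \<Rightarrow>\<^sub>0 complex) \<Rightarrow> word \<times> word \<Rightarrow> complex" where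
  "tensor_of X = (\<lambda>(x, y). if red x = x \<and> red y = y then lookup X (Abs_fg x, Abs_fg y) else 0)"

lemma alg_of_Rep_fg [simp]: "alg_of p (Rep_fg a) = lookup p a"
  by (simp add: alg_of_def Rep_fg_inverse)

lemma tensor_of_map_prod_Rep_fg [simp]: "tensor_of X (map_prod Rep_fg Rep_fg k) = lookup X k"
  by (cases k) (simp add: tensor_of_def Rep_fg_inverse)

lemma range_Rep_fg: "range Rep_fg = {w. red w = w}"
  by (rule type_definition.Rep_range[OF type_definition_fg])

lemma alg_of_nonzero_range: "alg_of p w \<noteq> 0 \<Longrightarrow> w \<in> range Rep_fg"
  by (auto simp: alg_of_def range_Rep_fg split: if_splits)

lemma tensor_of_nonzero_range:
  "tensor_of X z \<noteq> 0 \<Longrightarrow> z \<in> range (map_prod Rep_fg Rep_fg)"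
proof -
  have "range (map_prod Rep_fg Rep_fg) = {w. red w = w} \<times> {w. red w = w}"
    using map_prod_surj_on[OF range_Rep_fg range_Rep_fg] by simp
  then show "tensor_of X z \<noteq> 0 \<Longrightarrow> z \<in> range (map_prod Rep_fg Rep_fg)"
    by (cases z) (auto simp: tensor_of_def split: if_splits)
qed

lemma inj_Rep_fg: "inj Rep_fg"
  by (meson Rep_fg_inject injI)

lemma inj_map_prod_Rep_fg: "inj (map_prod Rep_fg Rep_fg)"
  using map_prod_inj_on[OF inj_Rep_fg inj_Rep_fg] by simp

lemma alg_of_in_algA: "alg_of p \<in> algA"
proof -
  have "{w. alg_of p w \<noteq> 0} \<subseteq> Rep_fg ` keys p"
  proof
    fix w assume w: "w \<in> {w. alg_of p w \<noteq> 0}"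
    then obtain a where "w = Rep_fg a" using alg_of_nonzero_range by blast
    with w show "w \<in> Rep_fg ` keys p" by (auto simp: in_keys_iff)
  qed
  then have "finite {w. alg_of p w \<noteq> 0}" by (rule finite_subset) simp
  then show ?thesis by (auto simp: algA_def alg_of_def split: if_splits)
qed

lemma mulA_alg_of: "mulA (alg_of p) (alg_of q) = alg_of (p * q)"
proof
  fix w
  let ?S = "{(x, y). alg_of p x \<noteq> 0 \<and> alg_of q y \<noteq> 0 \<and> red (x @ y) = w}"
  show "mulA (alg_of p) (alg_of q) w = alg_of (p * q) w"
  proof (cases "red w = w")
    case False
    then have "?S = {}" by (auto simp: alg_of_def)
    then have "mulA (alg_of p) (alg_of q) w = 0" unfolding mulA_def by (simp only: sum.empty)
    then show ?thesis using False by (simp add: alg_of_def)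
  next
    case True
    have "?S \<subseteq> range (map_prod Rep_fg Rep_fg)"
      by (auto dest!: alg_of_nonzero_range)
    then have "mulA (alg_of p) (alg_of q) w =
        (\<Sum>x\<in>map_prod Rep_fg Rep_fg -` ?S. lookup p (fst x) * lookup q (snd x))"
      unfolding mulA_def
      by (subst sum_reindex_inj_range[OF inj_map_prod_Rep_fg]) (simp_all add: comp_def)
    also have "map_prod Rep_fg Rep_fg -` ?S =
        {(a, b). lookup p a \<noteq> 0 \<and> lookup q b \<noteq> 0 \<and> a + b = Abs_fg w}"
      using True by (auto simp: plus_fg_eq_Abs_fg_iff)
    also have "(\<Sum>x\<in>\<dots>. lookup p (fst x) * lookup q (snd x)) = alg_of (p * q) w"
      using True by (simp add: alg_of_def lookup_times_eq_sum)
    finally show ?thesis .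
  qed
qed

lemma mulT_tensor_of: "mulT (tensor_of X) (tensor_of Y) = tensor_of (X * Y)"
proof (rule ext, clarify)
  fix w1 w2
  let ?S = "{(p, r). tensor_of X p \<noteq> 0 \<and> tensor_of Y r \<noteq> 0 \<and>
      red (fst p @ fst r) = w1 \<and> red (snd p @ snd r) = w2}"
  let ?R = "map_prod Rep_fg Rep_fg"
  show "mulT (tensor_of X) (tensor_of Y) (w1, w2) = tensor_of (X * Y) (w1, w2)"
  proof (cases "red w1 = w1 \<and> red w2 = w2")
    case False
    then have "?S = {}" by auto
    then have "mulT (tensor_of X) (tensor_of Y) (w1, w2) = 0"
      unfolding mulT_def by (simp only: sum.empty prod.case)
    then show ?thesis using False by (auto simp: tensor_of_def)
  next
    case True
    have "range (map_prod ?R ?R) = range ?R \<times> range ?R"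
      using map_prod_surj_on[of ?R UNIV _ ?R UNIV] by simp
    then have "?S \<subseteq> range (map_prod ?R ?R)"
      by (auto dest!: tensor_of_nonzero_range)
    moreover have "inj (map_prod ?R ?R)"
      using map_prod_inj_on[OF inj_map_prod_Rep_fg inj_map_prod_Rep_fg] by simp
    moreover have "mulT (tensor_of X) (tensor_of Y) (w1, w2) =
        (\<Sum>q\<in>?S. tensor_of X (fst q) * tensor_of Y (snd q))"
      by (simp add: mulT_def)
    ultimately have "mulT (tensor_of X) (tensor_of Y) (w1, w2) =
        (\<Sum>x\<in>map_prod ?R ?R -` ?S. lookup X (fst x) * lookup Y (snd x))"
      by (simp add: sum_reindex_inj_range comp_def)
    also have "map_prod ?R ?R -` ?S =
        {(a, b). lookup X a \<noteq> 0 \<and> lookup Y b \<noteq> 0 \<and> a + b = (Abs_fg w1, Abs_fg w2)}"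
      using True by (auto simp: plus_fg_eq_Abs_fg_iff case_prod_beta)
    also have "(\<Sum>x\<in>\<dots>. lookup X (fst x) * lookup Y (snd x)) = tensor_of (X * Y) (w1, w2)"
      using True by (simp add: tensor_of_def lookup_times_eq_sum)
    finally show ?thesis .
  qed
qed

lemma muT_tensor_of: "muT (tensor_of X) = alg_of (mult_map X)"
proof
  fix w
  let ?S = "{p. tensor_of X p \<noteq> 0 \<and> red (fst p @ snd p) = w}"
  show "muT (tensor_of X) w = alg_of (mult_map X) w"
  proof (cases "red w = w")
    case False
    then have "?S = {}" by auto
    then have "muT (tensor_of X) w = 0" unfolding muT_def by (simp only: sum.empty)
    then show ?thesis using False by (simp add: alg_of_def)
  next
    case True
    have "?S \<subseteq> range (map_prod Rep_fg Rep_fg)"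
      by (auto dest!: tensor_of_nonzero_range)
    then have "muT (tensor_of X) w = (\<Sum>k\<in>map_prod Rep_fg Rep_fg -` ?S. lookup X k)"
      unfolding muT_def
      by (subst sum_reindex_inj_range[OF inj_map_prod_Rep_fg])
        (simp_all add: comp_def case_prod_beta)
    also have "map_prod Rep_fg Rep_fg -` ?S = {k \<in> keys X. fst k + snd k = Abs_fg w}"
      using True by (auto simp: plus_fg_eq_Abs_fg_iff in_keys_iff case_prod_beta)
    also have "(\<Sum>k\<in>\<dots>. lookup X k) = alg_of (mult_map X) w"
      using True by (simp add: alg_of_def lookup_mult_map)
    finally show ?thesis .
  qed
qed

lemma tens_alg_of: "tens (alg_of p) (alg_of q) = tensor_of (tensor_pm p q)"
  by (rule ext) (auto simp: tens_def alg_of_def tensor_of_def lookup_tensor_pm)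

lemma addA_alg_of: "addA (alg_of p) (alg_of q) = alg_of (p + q)"
  by (rule ext) (simp add: addA_def alg_of_def lookup_add)

lemma smulA_minus_one_alg_of: "smulA (-1) (alg_of p) = alg_of (- p)"
  by (rule ext) (simp add: smulA_def alg_of_def lookup_uminus)

lemma addT_tensor_of: "addT (tensor_of X) (tensor_of Y) = tensor_of (X + Y)"
  by (rule ext) (auto simp: addT_def tensor_of_def lookup_add)

lemma smulT_minus_one_tensor_of: "smulT (-1) (tensor_of X) = tensor_of (- X)"
  by (rule ext) (auto simp: smulT_def tensor_of_def lookup_uminus)

lemma gen_eq_alg_of: "gen w = alg_of (single (Abs_fg (red w)) 1)"
  by (rule ext) (auto simp: gen_def alg_of_def lookup_single when_def Abs_fg_inject)

lemma oneA_eq_alg_of: "oneA = alg_of 1"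
  unfolding oneA_def gen_eq_alg_of one_poly_mapping_single by (simp add: zero_fg_def)

lemma zeroA_eq_alg_of: "zeroA = alg_of 0"
  by (rule ext) (simp add: zeroA_def alg_of_def)

definition pm_of_tensor :: "(word \<times> word \<Rightarrow> complex) \<Rightarrow> fg \<times> fg \<Rightarrow>\<^sub>0 complex" where
  "pm_of_tensor Z = Abs_poly_mapping (Z \<circ> map_prod Rep_fg Rep_fg)"

lemma lookup_pm_of_tensor:
  assumes "Z \<in> algT" shows "lookup (pm_of_tensor Z) = Z \<circ> map_prod Rep_fg Rep_fg"
proof -
  have "{k. (Z \<circ> map_prod Rep_fg Rep_fg) k \<noteq> 0} \<subseteq> map_prod Rep_fg Rep_fg -` {z. Z z \<noteq> 0}"
    by auto
  moreover have "finite (map_prod Rep_fg Rep_fg -` {z. Z z \<noteq> 0})"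
    using assms by (intro finite_vimageI inj_map_prod_Rep_fg) (simp add: algT_def)
  ultimately show ?thesis
    unfolding pm_of_tensor_def by (subst Abs_poly_mapping_inverse) (auto dest: finite_subset)
qed

lemma tensor_of_pm_of_tensor: "Z \<in> algT \<Longrightarrow> tensor_of (pm_of_tensor Z) = Z"
  by (rule ext) (auto simp: tensor_of_def lookup_pm_of_tensor algT_def Abs_fg_inverse; meson)

lemma tensor_of_in_algT: "tensor_of X \<in> algT"
proof -
  have "{z. tensor_of X z \<noteq> 0} \<subseteq> map_prod Rep_fg Rep_fg ` keys X"
  proof
    fix z assume z: "z \<in> {z. tensor_of X z \<noteq> 0}"
    then obtain k where "z = map_prod Rep_fg Rep_fg k" using tensor_of_nonzero_range[of X z] by auto
    with z show "z \<in> map_prod Rep_fg Rep_fg ` keys X" by (auto simp: in_keys_iff)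
  qed
  then show ?thesis
    by (auto simp: algT_def tensor_of_def intro: finite_subset split: if_splits)
qed

lemma pm_of_tensor_tensor_of: "pm_of_tensor (tensor_of X) = X"
  by (intro poly_mapping_eqI) (simp add: lookup_pm_of_tensor tensor_of_in_algT)

lemma tensor_of_inject: "tensor_of X = tensor_of Y \<longleftrightarrow> X = Y"
  by (metis pm_of_tensor_tensor_of)

section \<open>The double bracket and the flow\<close>

definition fg_gen :: "letter \<Rightarrow> fg \<Rightarrow>\<^sub>0 complex" where
  "fg_gen l = single (Abs_fg [l]) 1"

lemma fg_gen_mult_inv_letter: "fg_gen l * fg_gen (inv_letter l) = 1"
  by (simp add: fg_gen_def mult_single Abs_fg_plus cancel_cons_def zero_fg_def
      one_poly_mapping_single)

lemma inv_letter_mult_fg_gen: "fg_gen (inv_letter l) * fg_gen l = 1"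
  using fg_gen_mult_inv_letter[of "inv_letter l"] by simp

abbreviation "gen_u \<equiv> fg_gen (False, True)"
abbreviation "gen_u_inv \<equiv> fg_gen (False, False)"
abbreviation "gen_v \<equiv> fg_gen (True, True)"
abbreviation "gen_v_inv \<equiv> fg_gen (True, False)"

lemma gen_inverses:
  "gen_u * gen_u_inv = 1" "gen_u_inv * gen_u = 1" "gen_v * gen_v_inv = 1" "gen_v_inv * gen_v = 1"
  using fg_gen_mult_inv_letter[of "(False, True)"] inv_letter_mult_fg_gen[of "(False, True)"]
    fg_gen_mult_inv_letter[of "(True, True)"] inv_letter_mult_fg_gen[of "(True, True)"]
  by (simp_all add: inv_letter_def)

lemma gen_cancel:
  "gen_u * (gen_u_inv * x) = x" "gen_u_inv * (gen_u * x) = x"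
  "gen_v * (gen_v_inv * x) = x" "gen_v_inv * (gen_v * x) = x"
  by (simp_all add: gen_inverses flip: mult.assoc)

lemma gen_letter_eq_alg_of: "gen [l] = alg_of (fg_gen l)"
  by (simp add: gen_eq_alg_of fg_gen_def cancel_cons_def)

definition h_pm :: "fg \<Rightarrow>\<^sub>0 complex" where
  "h_pm = gen_u + gen_v + gen_u_inv + gen_v_inv + gen_u_inv * gen_v_inv"

definition c_pm :: "fg \<Rightarrow>\<^sub>0 complex" where
  "c_pm = gen_v + gen_u_inv"

lemma hK_eq_alg_of: "hK = alg_of h_pm"
  by (simp add: hK_def h_pm_def gu_def gv_def gen_letter_eq_alg_of addA_alg_of gen_eq_alg_of
      fg_gen_def mult_single Abs_fg_plus cancel_cons_def inv_letter_def)

lemma powA_eq_alg_of: "powA (alg_of p) n = alg_of (p ^ n)"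
  by (induction n) (simp_all add: oneA_eq_alg_of mulA_alg_of)

definition dbr_pm ::
    "((word \<times> word \<Rightarrow> complex) \<Rightarrow> word \<times> word \<Rightarrow> complex) \<Rightarrow>
      (fg \<times> fg \<Rightarrow>\<^sub>0 complex) \<Rightarrow> fg \<times> fg \<Rightarrow>\<^sub>0 complex" where
  "dbr_pm K X = pm_of_tensor (K (tensor_of X))"

definition flow ::
    "((word \<times> word \<Rightarrow> complex) \<Rightarrow> word \<times> word \<Rightarrow> complex) \<Rightarrow>
      (fg \<Rightarrow>\<^sub>0 complex) \<Rightarrow> fg \<Rightarrow>\<^sub>0 complex" where
  "flow K q = mult_map (dbr_pm K (tensor_pm h_pm q))"

context
  fixes K :: "(word \<times> word \<Rightarrow> complex) \<Rightarrow> word \<times> word \<Rightarrow> complex"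
  assumes K: "kontsevich_dbr K"
begin

lemma K_tensor_of: "K (tensor_of X) = tensor_of (dbr_pm K X)"
  using K by (simp add: dbr_pm_def kontsevich_dbr_def tensor_of_in_algT tensor_of_pm_of_tensor)

lemma dbr_pm_eqI: "K (tensor_of X) = tensor_of Y \<Longrightarrow> dbr_pm K X = Y"
  by (simp add: K_tensor_of tensor_of_inject)

lemma dbr_pm_add: "dbr_pm K (X + Y) = dbr_pm K X + dbr_pm K Y"
proof (rule dbr_pm_eqI)
  have "K (tensor_of (X + Y)) = addT (K (tensor_of X)) (K (tensor_of Y))"
    using K by (simp add: kontsevich_dbr_def tensor_of_in_algT flip: addT_tensor_of)
  then show "K (tensor_of (X + Y)) = tensor_of (dbr_pm K X + dbr_pm K Y)"
    by (simp add: K_tensor_of addT_tensor_of)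
qed

lemma dbr_pm_leibniz_right:
  "dbr_pm K (tensor_pm p (q * r)) =
    dbr_pm K (tensor_pm p q) * tensor_pm 1 r + tensor_pm q 1 * dbr_pm K (tensor_pm p r)"
proof (rule dbr_pm_eqI)
  have "K (tensor_of (tensor_pm p (q * r))) = K (tens (alg_of p) (mulA (alg_of q) (alg_of r)))"
    by (simp add: tens_alg_of mulA_alg_of)
  also have "\<dots> = addT (mulT (K (tens (alg_of p) (alg_of q))) (tens oneA (alg_of r)))
      (mulT (tens (alg_of q) oneA) (K (tens (alg_of p) (alg_of r))))"
    using K by (simp add: kontsevich_dbr_def alg_of_in_algA)
  finally show "K (tensor_of (tensor_pm p (q * r))) =
      tensor_of (dbr_pm K (tensor_pm p q) * tensor_pm 1 r +
        tensor_pm q 1 * dbr_pm K (tensor_pm p r))"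
    by (simp add: tens_alg_of oneA_eq_alg_of K_tensor_of mulT_tensor_of addT_tensor_of)
qed

lemma dbr_pm_leibniz_left:
  "dbr_pm K (tensor_pm (p * q) r) =
    dbr_pm K (tensor_pm p r) * tensor_pm q 1 + tensor_pm 1 p * dbr_pm K (tensor_pm q r)"
proof (rule dbr_pm_eqI)
  have "K (tensor_of (tensor_pm (p * q) r)) = K (tens (mulA (alg_of p) (alg_of q)) (alg_of r))"
    by (simp add: tens_alg_of mulA_alg_of)
  also have "\<dots> = addT (mulT (K (tens (alg_of p) (alg_of r))) (tens (alg_of q) oneA))
      (mulT (tens oneA (alg_of p)) (K (tens (alg_of q) (alg_of r))))"
    using K by (simp add: kontsevich_dbr_def alg_of_in_algA)
  finally show "K (tensor_of (tensor_pm (p * q) r)) =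
      tensor_of (dbr_pm K (tensor_pm p r) * tensor_pm q 1 +
        tensor_pm 1 p * dbr_pm K (tensor_pm q r))"
    by (simp add: tens_alg_of oneA_eq_alg_of K_tensor_of mulT_tensor_of addT_tensor_of)
qed

lemma dbr_pm_generators:
  "dbr_pm K (tensor_pm gen_u gen_v) = - tensor_pm (gen_v * gen_u) 1"
  "dbr_pm K (tensor_pm gen_v gen_u) = tensor_pm (gen_u * gen_v) 1"
  "dbr_pm K (tensor_pm gen_u gen_u) = 0"
  "dbr_pm K (tensor_pm gen_v gen_v) = 0"
  using K by (auto intro!: dbr_pm_eqI simp: kontsevich_dbr_def gu_def gv_def gen_letter_eq_alg_of
      tens_alg_of mulA_alg_of oneA_eq_alg_of zeroA_eq_alg_of smulT_minus_one_tensor_of)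

lemma dbr_pm_inverse:
  assumes "p * q = 1" "q * p = 1"
  shows "dbr_pm K (tensor_pm q r) = - (tensor_pm 1 q * dbr_pm K (tensor_pm p r) * tensor_pm q 1)"
  by (rule twisted_derivation_inverse[where \<delta> = "\<lambda>x. dbr_pm K (tensor_pm x r)"])
    (simp_all add: dbr_pm_leibniz_left tensor_pm_mult tensor_pm_one assms)

lemma flow_add: "flow K (q + r) = flow K q + flow K r"
  by (simp add: flow_def tensor_pm_add dbr_pm_add mult_map_add)

lemma flow_leibniz: "flow K (q * r) = flow K q * r + q * flow K r"
  by (simp add: flow_def dbr_pm_leibniz_right mult_map_add mult_map_mult_tensor_one
      mult_map_tensor_one_mult)

lemma flow_inverse: "p * q = 1 \<Longrightarrow> q * p = 1 \<Longrightarrow> flow K q = - (q * flow K p * q)"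
  using twisted_derivation_inverse[of "flow K" id id p q] by (simp add: flow_leibniz)

text \<open>Of the five terms of h only v, v^-1 and u^-1 v^-1 pair nontrivially with u, contributing
  u v, - u v^-1 and - v^-1.\<close>

lemma flow_gen_u: "flow K gen_u = gen_u * gen_v - gen_u * gen_v_inv - gen_v_inv"
proof -
  have "dbr_pm K (tensor_pm gen_u_inv gen_u) = 0"
    using dbr_pm_inverse[OF gen_inverses(1,2)] by (simp add: dbr_pm_generators)
  moreover have "dbr_pm K (tensor_pm gen_v_inv gen_u) = - tensor_pm gen_u gen_v_inv"
    using dbr_pm_inverse[OF gen_inverses(3,4)]
    by (simp add: dbr_pm_generators tensor_pm_mult mult.assoc gen_inverses gen_cancel)
  ultimately show ?thesis
    by (simp add: flow_def h_pm_def tensor_pm_add dbr_pm_add dbr_pm_leibniz_left dbr_pm_generators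
        mult_map_add mult_map_diff mult_map_tensor_pm tensor_pm_mult mult.assoc gen_inverses
        gen_cancel)
qed

lemma flow_gen_v: "flow K gen_v = gen_v * gen_u_inv + gen_u_inv - gen_v * gen_u"
proof -
  have "dbr_pm K (tensor_pm gen_u_inv gen_v) = tensor_pm gen_v gen_u_inv"
    using dbr_pm_inverse[OF gen_inverses(1,2)]
    by (simp add: dbr_pm_generators tensor_pm_mult mult.assoc gen_inverses gen_cancel)
  moreover have "dbr_pm K (tensor_pm gen_v_inv gen_v) = 0"
    using dbr_pm_inverse[OF gen_inverses(3,4)] by (simp add: dbr_pm_generators)
  ultimately show ?thesis
    by (simp add: flow_def h_pm_def tensor_pm_add dbr_pm_add dbr_pm_leibniz_left dbr_pm_generators
        mult_map_add mult_map_diff mult_map_uminus mult_map_tensor_pm tensor_pm_mult mult.assoc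
        gen_inverses gen_cancel)
qed

lemma flow_gen_u_inv:
  "flow K gen_u_inv = gen_v_inv * gen_u_inv + gen_u_inv * gen_v_inv * gen_u_inv - gen_v * gen_u_inv"
proof -
  have "flow K gen_u_inv = - (gen_u_inv * flow K gen_u * gen_u_inv)"
    by (rule flow_inverse[OF gen_inverses(1,2)])
  also have "\<dots> = gen_v_inv * gen_u_inv + gen_u_inv * gen_v_inv * gen_u_inv - gen_v * gen_u_inv"
    by (simp add: flow_gen_u algebra_simps gen_cancel gen_inverses)
  finally show ?thesis .
qed

lemma flow_gen_v_inv:
  "flow K gen_v_inv = gen_u * gen_v_inv - gen_u_inv * gen_v_inv - gen_v_inv * gen_u_inv * gen_v_inv"
proof -
  have "flow K gen_v_inv = - (gen_v_inv * flow K gen_v * gen_v_inv)"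
    by (rule flow_inverse[OF gen_inverses(3,4)])
  also have "\<dots> = gen_u * gen_v_inv - gen_u_inv * gen_v_inv - gen_v_inv * gen_u_inv * gen_v_inv"
    by (simp add: flow_gen_v algebra_simps gen_cancel gen_inverses)
  finally show ?thesis .
qed

lemma flow_h: "flow K h_pm = h_pm * c_pm - c_pm * h_pm"
  by (simp add: h_pm_def c_pm_def flow_add flow_leibniz flow_gen_u flow_gen_v flow_gen_u_inv
      flow_gen_v_inv algebra_simps gen_cancel gen_inverses)

end

theorem mainTheorem3:
  fixes K :: "(word \<times> word \<Rightarrow> complex) \<Rightarrow> (word \<times> word \<Rightarrow> complex)" and k :: nat
  assumes "kontsevich_dbr K" and "0 < k"
  shows "brK K hK (powA hK k) \<in> commA"
proof -
  have "brK K hK (powA hK k) = alg_of (flow K (h_pm ^ k))"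
    unfolding flow_def
    by (simp add: brK_def hK_eq_alg_of powA_eq_alg_of tens_alg_of K_tensor_of[OF assms(1)]
        muT_tensor_of)
  also have "\<dots> = alg_of (h_pm ^ k * c_pm - c_pm * h_pm ^ k)"
    using derivation_power_commutator[OF flow_leibniz[OF assms(1)] flow_h[OF assms(1)]] by simp
  also have "\<dots> = addA (mulA (alg_of (h_pm ^ k)) (alg_of c_pm))
      (smulA (-1) (mulA (alg_of c_pm) (alg_of (h_pm ^ k))))"
    by (simp add: mulA_alg_of smulA_minus_one_alg_of addA_alg_of)
  finally show ?thesis
    by (simp add: commA.comm alg_of_in_algA)
qed

end
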